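(* In an MFQST with degree bound $\phi=3$, every Steiner point has degree exactly $3$.
   Context: Let $Z=\{z_1,\dots,z_n\}\subset\mathbb{R}^2$ ($n\ge 1$) be a set of sources and $z_{BS}\in\mathbb{R}^2\setminus Z$ a sink; each source has supply $1$. A flow-dependent quadratic Steiner tree (FQST) consists of a finite set $S\subset\mathbb{R}^2$ of Steiner points and a tree $T$ with vertex set $Z\cup S\cup\{z_{BS}\}$ whose edges are directed towards $z_{BS}$. Every node other than the sink has exactly one out-edge, and the sink has none. Each edge $e$ carries a positive flow $f(e)$ such that: - at each source, the flow on its out-edge minus the total flow on its in-edges equals $1$; - at each Steiner point, the out-flow equals the total in-flow; - the sink receives total flow $n$. The cost is $L(T)=\sum_{e\in E(T)} f(e)|e|^2$. An MFQST with degree bound $\phi$ is an FQST minimising $L$ among all FQSTs (any finite $S$, any topology) in which every Steiner point has degree at least $\phi$. *)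

theory Defs
  imports "HOL-Analysis.Analysis"
begin

type_synonym pt = "real^2"

text \<open>Every non-sink vertex v has exactly one out-edge, namely (v, p v), carrying flow f v.\<close>

definition fqst :: "pt set \<Rightarrow> pt \<Rightarrow> pt set \<Rightarrow> (pt \<Rightarrow> pt) \<Rightarrow> (pt \<Rightarrow> real) \<Rightarrow> bool" where
  "fqst Z zBS S p f \<longleftrightarrow>
     finite S \<and> S \<inter> insert zBS Z = {} \<and>
     (\<forall>v\<in>Z \<union> S. p v \<in> Z \<union> S \<union> {zBS} \<and> f v > 0) \<and>
     (\<forall>v\<in>Z \<union> S \<union> {zBS}. \<exists>k. (p ^^ k) v = zBS) \<and>
     (\<forall>z\<in>Z. f z - (\<Sum>u\<in>{u\<in>Z \<union> S. p u = z}. f u) = 1) \<and>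
     (\<forall>s\<in>S. f s = (\<Sum>u\<in>{u\<in>Z \<union> S. p u = s}. f u)) \<and>
     (\<Sum>u\<in>{u\<in>Z \<union> S. p u = zBS}. f u) = real (card Z)"

definition fqst_cost :: "pt set \<Rightarrow> pt set \<Rightarrow> (pt \<Rightarrow> pt) \<Rightarrow> (pt \<Rightarrow> real) \<Rightarrow> real" where
  "fqst_cost Z S p f = (\<Sum>v\<in>Z \<union> S. f v * (dist v (p v))\<^sup>2)"

text \<open>Degree of a (non-sink) vertex: number of in-edges plus its one out-edge.\<close>
definition fqst_degree :: "pt set \<Rightarrow> pt set \<Rightarrow> (pt \<Rightarrow> pt) \<Rightarrow> pt \<Rightarrow> nat" where
  "fqst_degree Z S p s = card {u\<in>Z \<union> S. p u = s} + 1"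

definition mfqst :: "nat \<Rightarrow> pt set \<Rightarrow> pt \<Rightarrow> pt set \<Rightarrow> (pt \<Rightarrow> pt) \<Rightarrow> (pt \<Rightarrow> real) \<Rightarrow> bool" where
  "mfqst \<phi> Z zBS S p f \<longleftrightarrow>
     fqst Z zBS S p f \<and> (\<forall>s\<in>S. fqst_degree Z S p s \<ge> \<phi>) \<and>
     (\<forall>S' p' f'. fqst Z zBS S' p' f' \<and> (\<forall>s\<in>S'. fqst_degree Z S' p' s \<ge> \<phi>)
        \<longrightarrow> fqst_cost Z S p f \<le> fqst_cost Z S' p' f')"

end

theory Submission
  imports Defs
begin

(* Let s be a Steiner point of an MFQST with degree bound 3.  By the
   degree bound s has at least two children; suppose it has three or more.  For
   children u of s write a_u = f u *R (u - s).  The a_u are nonzero (s is not its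
   own child, as every path leads to the sink), and three nonzero vectors cannot
   have all pairwise sums zero, so there are two children u1, u2 with
   g = a_u1 + a_u2 \<noteq> 0.  Splitting s, i.e. inserting a fresh Steiner point
   s' = s + (t / (f u1 + f u2)) *R g with 0 < t < 1 between u1, u2 and s, gives an
   FQST that still satisfies the degree bound (s' has degree 3, s loses one child)
   and whose cost changes by 2 (t/w) |g|^2 (t - 1) < 0, contradicting minimality. *)

abbreviation children :: "pt set \<Rightarrow> pt set \<Rightarrow> (pt \<Rightarrow> pt) \<Rightarrow> pt \<Rightarrow> pt set" where
  "children Z S p x \<equiv> {u \<in> Z \<union> S. p u = x}"

text \<open>A finite set cannot contain a whole open segment, so a fresh point can be
  chosen strictly inside any nondegenerate segment.\<close>
lemma fresh_point_on_segment:
  fixes a b :: "'a :: real_vector"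
  assumes "finite V" and "b \<noteq> 0"
  obtains t where "0 < t" "t < 1" "a + t *\<^sub>R b \<notin> V"
proof -
  have inj: "inj_on (\<lambda>t. a + t *\<^sub>R b) {0<..<1}"
    using \<open>b \<noteq> 0\<close> by (auto intro!: inj_onI)
  have "infinite ((\<lambda>t. a + t *\<^sub>R b) ` {0<..<1})"
  proof
    assume "finite ((\<lambda>t. a + t *\<^sub>R b) ` {0<..<1})"
    then have "finite {0<..<(1::real)}" by (rule finite_imageD[OF _ inj])
    then show False using infinite_Ioo[of "0::real" 1] by simp
  qed
  then have "\<not> (\<lambda>t. a + t *\<^sub>R b) ` {0<..<1} \<subseteq> V"
    using \<open>finite V\<close> finite_subset by blast
  then obtain t where "t \<in> {0<..<1}" "a + t *\<^sub>R b \<notin> V" by blast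
  then show ?thesis by (intro that) auto
qed

text \<open>Cost change when the edges u1 \<rightarrow> s and u2 \<rightarrow> s (weights a, b) are replaced by
  u1 \<rightarrow> s', u2 \<rightarrow> s' and s' \<rightarrow> s (weight a + b), where s' moves from s towards the
  weighted mean of u1, u2 by the fraction t.  The change is strictly negative for
  0 < t < 1: the quadratic cost rewards partial merging of the two edges.\<close>
lemma split_cost_change:
  fixes u1 u2 s :: "'a :: real_inner" and a b t :: real
  assumes "a > 0" "b > 0" "0 < t" "t < 1"
    and g_def: "g = a *\<^sub>R (u1 - s) + b *\<^sub>R (u2 - s)" and "g \<noteq> 0"
    and s'_def: "s' = s + (t / (a + b)) *\<^sub>R g"
  shows "(a + b) * (dist s' s)\<^sup>2 + a * ((dist u1 s')\<^sup>2 - (dist u1 s)\<^sup>2)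
           + b * ((dist u2 s')\<^sup>2 - (dist u2 s)\<^sup>2) < 0"
proof -
  define w where "w = a + b"
  define d where "d = (t / w) *\<^sub>R g"
  have w: "w > 0" using assms w_def by simp
  have sq_shift: "(dist u s')\<^sup>2 - (dist u s)\<^sup>2 = d \<bullet> d - 2 * ((u - s) \<bullet> d)" for u
  proof -
    have shift: "u - s' = (u - s) - d" using s'_def d_def w_def by simp
    have "(dist u s')\<^sup>2 = (u - s') \<bullet> (u - s')"
      by (simp add: dist_norm power2_norm_eq_inner)
    also have "\<dots> = ((u - s) - d) \<bullet> ((u - s) - d)" by (simp only: shift)
    also have "\<dots> = (dist u s)\<^sup>2 + d \<bullet> d - 2 * ((u - s) \<bullet> d)"
      by (simp add: dist_norm power2_norm_eq_inner inner_diff_left inner_diff_right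
          inner_commute)
    finally show ?thesis by simp
  qed
  have "s' - s = d" using s'_def d_def w_def by simp
  then have "(dist s' s)\<^sup>2 = d \<bullet> d" by (metis dist_norm power2_norm_eq_inner)
  moreover have "g \<bullet> d = a * ((u1 - s) \<bullet> d) + b * ((u2 - s) \<bullet> d)"
    unfolding g_def by (simp add: inner_add_left)
  ultimately have "w * (dist s' s)\<^sup>2 + a * ((dist u1 s')\<^sup>2 - (dist u1 s)\<^sup>2)
               + b * ((dist u2 s')\<^sup>2 - (dist u2 s)\<^sup>2) = 2 * w * (d \<bullet> d) - 2 * (g \<bullet> d)"
    using w_def by (simp add: sq_shift algebra_simps)
  also have "\<dots> = 2 * (t / w) * (g \<bullet> g) * (t - 1)"
    using w by (simp add: d_def field_simps)
  also have "\<dots> < 0"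
    using assms w by (intro mult_pos_neg) auto
  finally show ?thesis using w_def by simp
qed

lemma nonzero_pairwise_sum:
  fixes x y z :: "'a :: real_vector"
  assumes "z \<noteq> 0"
  shows "x + y \<noteq> 0 \<or> x + z \<noteq> 0 \<or> y + z \<noteq> 0"
proof (rule ccontr)
  assume "\<not> ?thesis"
  then have "(x + z) + (y + z) - (x + y) = 0" by simp
  then have "2 *\<^sub>R z = 0" by (simp add: scaleR_2 algebra_simps)
  then show False using assms by simp
qed

text \<open>No vertex other than the sink is its own parent: otherwise it would never reach the sink.\<close>
lemma fqst_parent_neq:
  assumes "fqst Z zBS S p f" and "v \<in> Z \<union> S" and "v \<noteq> zBS"
  shows "p v \<noteq> v"
proof
  assume fix_v: "p v = v"
  have "(p ^^ k) v = v" for k by (induction k) (simp_all add: fix_v)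
  moreover obtain k where "(p ^^ k) v = zBS"
    using assms unfolding fqst_def by blast
  ultimately show False using assms unfolding fqst_def by auto
qed

section \<open>Splitting a Steiner point\<close>

locale fqst_split =
  fixes Z :: "pt set" and zBS :: pt and S :: "pt set" and p :: "pt \<Rightarrow> pt"
    and f :: "pt \<Rightarrow> real" and s u1 u2 s' :: pt
  assumes tree: "fqst Z zBS S p f" and finite_Z: "finite Z"
    and s_in: "s \<in> S" and u1_in: "u1 \<in> Z \<union> S" and u2_in: "u2 \<in> Z \<union> S"
    and u12: "u1 \<noteq> u2" and p_u1: "p u1 = s" and p_u2: "p u2 = s"
    and fresh: "s' \<notin> Z \<union> S \<union> {zBS}"
begin

definition S' :: "pt set" where "S' = insert s' S"
definition p' :: "pt \<Rightarrow> pt" where "p' = p(u1 := s', u2 := s', s' := s)"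
definition f' :: "pt \<Rightarrow> real" where "f' = f(s' := f u1 + f u2)"

lemma finite_S: "finite S" and disjoint: "S \<inter> insert zBS Z = {}"
  and parent_in: "\<And>v. v \<in> Z \<union> S \<Longrightarrow> p v \<in> Z \<union> S \<union> {zBS}"
  and flow_pos: "\<And>v. v \<in> Z \<union> S \<Longrightarrow> f v > 0"
  and reaches: "\<And>v. v \<in> Z \<union> S \<union> {zBS} \<Longrightarrow> \<exists>k. (p ^^ k) v = zBS"
  and source_balance: "\<And>z. z \<in> Z \<Longrightarrow> f z - sum f (children Z S p z) = 1"
  and steiner_balance: "\<And>x. x \<in> S \<Longrightarrow> f x = sum f (children Z S p x)"
  and sink_inflow: "sum f (children Z S p zBS) = real (card Z)"
  using tree unfolding fqst_def by blast+

lemma ZS': "Z \<union> S' = insert s' (Z \<union> S)"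
  by (auto simp: S'_def)

lemma s'_notin: "s' \<notin> Z \<union> S" and s'_neq: "s' \<noteq> s" "s' \<noteq> u1" "s' \<noteq> u2" "s' \<noteq> zBS"
  using fresh s_in u1_in u2_in by auto

lemma p'_simps: "p' u1 = s'" "p' u2 = s'" "p' s' = s"
  "\<And>v. v \<noteq> u1 \<Longrightarrow> v \<noteq> u2 \<Longrightarrow> v \<noteq> s' \<Longrightarrow> p' v = p v"
  using s'_neq by (auto simp: p'_def)

lemma f'_eq: "\<And>v. v \<in> Z \<union> S \<Longrightarrow> f' v = f v"
  using s'_notin by (auto simp: f'_def)

lemma children_other: "x \<noteq> s \<Longrightarrow> x \<noteq> s' \<Longrightarrow> children Z S' p' x = children Z S p x"
  using p_u1 p_u2 s'_notin by (auto simp: ZS' p'_def)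

lemma children_s: "children Z S' p' s = insert s' (children Z S p s - {u1, u2})"
  using s'_neq by (auto simp: ZS' p'_def)

lemma children_s': "children Z S' p' s' = {u1, u2}"
  using s'_neq u1_in u2_in parent_in fresh by (auto simp: ZS' p'_def)

lemma finite_children: "finite (children Z S p x)"
  using finite_Z finite_S by simp

text \<open>Every path to the sink in the old tree gives one in the new tree: the split
  only lengthens the paths through u1 and u2 by one step via s'.\<close>
lemma reaches_split:
  assumes "(p ^^ k) v = zBS" and "v \<in> Z \<union> S \<union> {zBS}"
  shows "\<exists>m. (p' ^^ m) v = zBS"
  using assms
proof (induction k arbitrary: v)
  case 0
  then show ?case by (metis funpow_0)
next
  case (Suc k)
  show ?case
  proof (cases "v = zBS")
    case True
    then show ?thesis by (metis funpow_0)
  next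
    case False
    then have v: "v \<in> Z \<union> S" using Suc.prems by auto
    have "(p ^^ k) (p v) = zBS"
      using Suc.prems(1) by (simp add: funpow_Suc_right del: funpow.simps)
    then obtain m where m: "(p' ^^ m) (p v) = zBS"
      using Suc.IH parent_in[OF v] by blast
    show ?thesis
    proof (cases "v = u1 \<or> v = u2")
      case True
      then have "p' (p' v) = p v" using p'_simps p_u1 p_u2 by auto
      then have "(p' ^^ Suc (Suc m)) v = zBS" using m by (simp only: funpow_Suc_right comp_apply)
      then show ?thesis by blast
    next
      case False
      then have "p' v = p v" using p'_simps v s'_notin by auto
      then have "(p' ^^ Suc m) v = zBS" using m by (simp only: funpow_Suc_right comp_apply)
      then show ?thesis by blast
    qed
  qed
qed

lemma sum_f'_eq: "A \<subseteq> Z \<union> S \<Longrightarrow> sum f' A = sum f A"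
  by (rule sum.cong) (auto simp: f'_eq)

lemma split_fqst: "fqst Z zBS S' p' f'"
  unfolding fqst_def
proof (intro conjI ballI)
  show "finite S'" using finite_S by (simp add: S'_def)
  show "S' \<inter> insert zBS Z = {}" using disjoint fresh by (auto simp: S'_def)
next
  fix v assume v: "v \<in> Z \<union> S'"
  show "p' v \<in> Z \<union> S' \<union> {zBS}"
    using v parent_in s_in by (auto simp: ZS' S'_def p'_def)
  show "f' v > 0"
    using v flow_pos flow_pos[OF u1_in] flow_pos[OF u2_in] by (auto simp: ZS' f'_def)
next
  fix v assume v: "v \<in> Z \<union> S' \<union> {zBS}"
  show "\<exists>k. (p' ^^ k) v = zBS"
  proof (cases "v = s'")
    case True
    obtain m where "(p' ^^ m) s = zBS"
      using reaches_split reaches s_in by blast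
    then have "(p' ^^ Suc m) v = zBS"
      using True p'_simps(3) by (simp only: funpow_Suc_right comp_apply)
    then show ?thesis by blast
  next
    case False
    then have "v \<in> Z \<union> S \<union> {zBS}" using v by (simp add: ZS')
    then show ?thesis using reaches reaches_split by meson
  qed
next
  fix z assume z: "z \<in> Z"
  then have "z \<noteq> s" "z \<noteq> s'" using disjoint s_in fresh by auto
  then show "f' z - sum f' (children Z S' p' z) = 1"
    using children_other sum_f'_eq source_balance z f'_eq by simp
next
  fix x assume x: "x \<in> S'"
  consider "x = s'" | "x = s" | "x \<noteq> s" "x \<noteq> s'" by blast
  then show "f' x = sum f' (children Z S' p' x)"
  proof cases
    case 1
    then show ?thesis using children_s' u12 s'_neq by (simp add: f'_def)
  next
    case 2
    let ?C = "children Z S p s"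
    have sub: "{u1, u2} \<subseteq> ?C" using u1_in u2_in p_u1 p_u2 by auto
    have "sum f' (children Z S' p' s) = f' s' + sum f' (?C - {u1, u2})"
      using children_s finite_children s'_notin by simp
    also have "sum f' (?C - {u1, u2}) = sum f (?C - {u1, u2})" by (rule sum_f'_eq) auto
    also have "\<dots> = sum f ?C - (f u1 + f u2)" using sum_diff[OF finite_children sub] u12 by simp
    finally show ?thesis using 2 s_in s'_neq steiner_balance by (simp add: f'_def)
  next
    case 3
    then have "x \<in> S" using x by (simp add: S'_def)
    then show ?thesis using 3 children_other sum_f'_eq steiner_balance f'_eq by simp
  qed
next
  have "zBS \<noteq> s" "zBS \<noteq> s'" using disjoint s_in s'_neq by auto
  then show "sum f' (children Z S' p' zBS) = real (card Z)"
    using children_other sink_inflow sum_f'_eq[of "children Z S p zBS"] by auto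
qed

text \<open>If s has at least three children, the split respects the degree bound 3:
  s' gets degree 3 and s keeps degree at least 3.\<close>
lemma split_degree:
  assumes "card (children Z S p s) \<ge> 3" and "\<forall>x\<in>S. fqst_degree Z S p x \<ge> 3"
  shows "\<forall>x\<in>S'. fqst_degree Z S' p' x \<ge> 3"
proof
  fix x assume x: "x \<in> S'"
  have sub: "{u1, u2} \<subseteq> children Z S p s" using u1_in u2_in p_u1 p_u2 by auto
  have "card (children Z S' p' s) = card (children Z S p s) - 2 + 1"
    using children_s finite_children s'_notin card_Diff_subset[OF _ sub] u12 by simp
  then show "fqst_degree Z S' p' x \<ge> 3"
    using assms x children_other children_s' u12
    by (cases "x = s'"; cases "x = s") (auto simp: fqst_degree_def S'_def)
qed

lemma split_cost:
  "fqst_cost Z S' p' f' - fqst_cost Z S p f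
     = (f u1 + f u2) * (dist s' s)\<^sup>2 + f u1 * ((dist u1 s')\<^sup>2 - (dist u1 s)\<^sup>2)
       + f u2 * ((dist u2 s')\<^sup>2 - (dist u2 s)\<^sup>2)"
proof -
  define h :: "(pt \<Rightarrow> pt) \<Rightarrow> (pt \<Rightarrow> real) \<Rightarrow> pt \<Rightarrow> real"
    where "h q g v = g v * (dist v (q v))\<^sup>2" for q g v
  have fin: "finite (Z \<union> S)" using finite_Z finite_S by simp
  have "fqst_cost Z S' p' f' = h p' f' s' + sum (h p' f') (Z \<union> S)"
    using fin s'_notin by (simp add: fqst_cost_def h_def ZS')
  moreover have "sum (h p' f') (Z \<union> S) - sum (h p f) (Z \<union> S)
                   = (\<Sum>v\<in>{u1, u2}. h p' f' v - h p f v)"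
    unfolding sum_subtractf[symmetric]
    by (rule sum.mono_neutral_right[OF fin])
      (use u1_in u2_in f'_eq s'_notin in \<open>auto simp: h_def p'_def\<close>)
  ultimately show ?thesis
    using u12 p'_simps p_u1 p_u2 u1_in u2_in f'_eq
    by (simp add: fqst_cost_def h_def f'_def algebra_simps)
qed

end

lemma cheaper_split:
  assumes "fqst Z zBS S p f" and "finite Z" and "s \<in> S"
    and "u1 \<in> children Z S p s" and "u2 \<in> children Z S p s" and "u1 \<noteq> u2"
    and g_nonzero: "f u1 *\<^sub>R (u1 - s) + f u2 *\<^sub>R (u2 - s) \<noteq> 0"
    and "card (children Z S p s) \<ge> 3" and "\<forall>x\<in>S. fqst_degree Z S p x \<ge> 3"
  obtains S' p' f' where "fqst Z zBS S' p' f'" "\<forall>x\<in>S'. fqst_degree Z S' p' x \<ge> 3"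
    "fqst_cost Z S' p' f' < fqst_cost Z S p f"
proof -
  define w where "w = f u1 + f u2"
  define g where "g = f u1 *\<^sub>R (u1 - s) + f u2 *\<^sub>R (u2 - s)"
  have pos: "f u1 > 0" "f u2 > 0" using assms(1,4,5) unfolding fqst_def by auto
  have fin: "finite (Z \<union> S \<union> {zBS})" using assms(1,2) unfolding fqst_def by simp
  have "(1 / w) *\<^sub>R g \<noteq> 0" using g_nonzero pos by (simp add: w_def g_def)
  then obtain t where t: "0 < t" "t < 1"
    and fresh: "s + t *\<^sub>R ((1 / w) *\<^sub>R g) \<notin> Z \<union> S \<union> {zBS}"
    by (rule fresh_point_on_segment[OF fin])
  define s' where "s' = s + (t / w) *\<^sub>R g"
  interpret fqst_split Z zBS S p f s u1 u2 s'
    using assms fresh by unfold_locales (simp_all add: s'_def)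
  have "fqst_cost Z S' p' f' - fqst_cost Z S p f < 0"
    unfolding split_cost using split_cost_change[OF pos t g_def g_nonzero[folded g_def]]
    by (simp add: s'_def w_def)
  then show ?thesis
    using that[OF split_fqst split_degree[OF assms(8,9)]] by simp
qed

theorem mainTheorem8:
  fixes Z :: "pt set" and zBS :: pt and S :: "pt set"
    and p :: "pt \<Rightarrow> pt" and f :: "pt \<Rightarrow> real"
  assumes "finite Z" and "Z \<noteq> {}" and "zBS \<notin> Z"
    and "mfqst 3 Z zBS S p f"
  shows "\<forall>s\<in>S. fqst_degree Z S p s = 3"
proof
  fix s assume s: "s \<in> S"
  have tree: "fqst Z zBS S p f" and deg: "\<forall>x\<in>S. fqst_degree Z S p x \<ge> 3"
    and minimal: "\<And>S' p' f'. fqst Z zBS S' p' f' \<Longrightarrow> \<forall>x\<in>S'. fqst_degree Z S' p' x \<ge> 3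
                    \<Longrightarrow> fqst_cost Z S p f \<le> fqst_cost Z S' p' f'"
    using assms(4) unfolding mfqst_def by blast+
  let ?C = "children Z S p s"
  show "fqst_degree Z S p s = 3"
  proof (rule ccontr)
    assume "fqst_degree Z S p s \<noteq> 3"
    then have C3: "card ?C \<ge> 3" using deg s by (auto simp: fqst_degree_def)
    then obtain u1 u2 u3 where u: "u1 \<in> ?C" "u2 \<in> ?C" "u3 \<in> ?C"
      and distinct: "u1 \<noteq> u2" "u1 \<noteq> u3" "u2 \<noteq> u3"
      by (auto simp: numeral_eq_Suc card_le_Suc_iff)
    have "s \<noteq> zBS" "f u3 > 0" using s u(3) tree unfolding fqst_def by auto
    moreover have "u3 \<noteq> s" using u(3) s fqst_parent_neq[OF tree _ \<open>s \<noteq> zBS\<close>] by auto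
    ultimately have "f u3 *\<^sub>R (u3 - s) \<noteq> 0" by simp
    then obtain x y where "x \<in> ?C" "y \<in> ?C" "x \<noteq> y"
      "f x *\<^sub>R (x - s) + f y *\<^sub>R (y - s) \<noteq> 0"
      using nonzero_pairwise_sum[of "f u3 *\<^sub>R (u3 - s)" "f u1 *\<^sub>R (u1 - s)" "f u2 *\<^sub>R (u2 - s)"]
        u distinct by auto
    then obtain S' p' f' where "fqst Z zBS S' p' f'" "\<forall>x\<in>S'. fqst_degree Z S' p' x \<ge> 3"
      "fqst_cost Z S' p' f' < fqst_cost Z S p f"
      using cheaper_split[OF tree assms(1) s _ _ _ _ C3 deg] by blast
    then show False using minimal[of S' p' f'] by simp
  qed
qed


end
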